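(* Let $x\in\mathcal D$ be such that $q_n(t)=\sum_{i:\,t^n_i\le t}(x(t^n_{i+1})-x(t^n_i))^2$ converges pointwise on $[0,\infty)$ to a function $q$ satisfying $q(t)=q^c(t)+\sum_{u\le t}(\Delta x(u))^2$ with $q^c$ continuous and nondecreasing. Then $q_n\to q$ in the Skorokhod $J_1$ topology.
   Context: Let $\pi=(\pi_n)_{n\ge1}$ be a sequence of partitions $\pi_n=(t^n_0,\dots,t^n_{k_n})$ with $0=t^n_0<\dots<t^n_{k_n}<\infty$, $t^n_{k_n}\uparrow\infty$, and mesh tending to $0$ on compacts; sums over $i$ run over $0\le i<k_n$. $\mathcal D$ is the space of càdlàg functions $[0,\infty)\to\mathbb R$, with the Skorokhod $J_1$ topology; $\Delta x(u)=x(u)-x(u-)$. *)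

theory Defs
  imports "HOL-Analysis.Analysis"
begin

text \<open>Cadlag functions on [0,oo) (represented as real functions; values on negative reals irrelevant).\<close>
definition cadlag :: "(real \<Rightarrow> real) \<Rightarrow> bool" where
  "cadlag x \<longleftrightarrow>
     (\<forall>t\<ge>0. (x \<longlongrightarrow> x t) (at_right t)) \<and>
     (\<forall>t>0. \<exists>l. (x \<longlongrightarrow> l) (at_left t))"

text \<open>Jump Delta x(u) = x(u) - x(u-), with the convention x(0-) = x(0).\<close>
definition jump :: "(real \<Rightarrow> real) \<Rightarrow> real \<Rightarrow> real" where
  "jump x u = (if u > 0 then x u - Lim (at_left u) x else 0)"

text \<open>Sequence of partitions: pi_n = (t n 0, ..., t n (k n)).\<close>
definition partition_seq :: "(nat \<Rightarrow> nat \<Rightarrow> real) \<Rightarrow> (nat \<Rightarrow> nat) \<Rightarrow> bool" where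
  "partition_seq t k \<longleftrightarrow>
     (\<forall>n. t n 0 = 0) \<and>
     (\<forall>n i. i < k n \<longrightarrow> t n i < t n (Suc i)) \<and>
     mono (\<lambda>n. t n (k n)) \<and>
     filterlim (\<lambda>n. t n (k n)) at_top sequentially \<and>
     (\<forall>T. \<forall>e>0. \<forall>\<^sub>F n in sequentially.
        \<forall>i<k n. t n i \<le> T \<longrightarrow> t n (Suc i) - t n i \<le> e)"

definition qv_approx :: "(nat \<Rightarrow> nat \<Rightarrow> real) \<Rightarrow> (nat \<Rightarrow> nat) \<Rightarrow> (real \<Rightarrow> real) \<Rightarrow> nat \<Rightarrow> real \<Rightarrow> real" where
  "qv_approx t k x n s = (\<Sum>i\<in>{i. i < k n \<and> t n i \<le> s}. (x (t n (Suc i)) - x (t n i))^2)"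

definition time_change :: "(real \<Rightarrow> real) \<Rightarrow> bool" where
  "time_change l \<longleftrightarrow> continuous_on {0..} l \<and> strict_mono_on {0..} l \<and> l 0 = 0 \<and> l ` {0..} = {0..}"

text \<open>Convergence of a sequence in D[0,oo) with the Skorokhod J1 topology
  (sequential characterization, Jacod-Shiryaev VI.1.14).\<close>
definition J1_tendsto :: "(nat \<Rightarrow> real \<Rightarrow> real) \<Rightarrow> (real \<Rightarrow> real) \<Rightarrow> bool" where
  "J1_tendsto f g \<longleftrightarrow>
     (\<exists>l. (\<forall>n. time_change (l n)) \<and>
          (\<forall>e>0. \<forall>\<^sub>F n in sequentially. \<forall>s\<ge>0. \<bar>l n s - s\<bar> \<le> e) \<and>
          (\<forall>T\<ge>0. \<forall>e>0. \<forall>\<^sub>F n in sequentially. \<forall>s\<in>{0..T}. \<bar>f n (l n s) - g s\<bar> \<le> e))"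

end

theory Submission
  imports Defs
begin

(* Fix a horizon and a tolerance e. Finitely many jumps of x carry all but e of the jump part
   of q, and on a fine grid G containing them the continuous part qc moves by at most e between
   neighbouring points. For large n, q_n is e-close to q at the points of G, and at each big jump u
   the partition interval straddling u carries an increment close to (Delta x(u))^2, so q_n jumps
   near u at the last partition point before u. A time change that fixes the other grid points and
   moves each big jump onto that partition point (a sum of small tents) aligns the jumps; between
   neighbouring grid points monotonicity of q_n and q then gives uniform closeness. A diagonal
   choice over e -> 0 and the horizon -> oo yields J1 convergence. *)

definition tent :: "real \<Rightarrow> real \<Rightarrow> real \<Rightarrow> real" where
  "tent r u s = max 0 (1 - \<bar>s - u\<bar> / r)"

lemma tent_lipschitz:
  assumes "r > 0"
  shows "\<bar>tent r u s' - tent r u s\<bar> \<le> \<bar>s' - s\<bar> / r"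
proof -
  have "(1 - \<bar>s' - u\<bar> / r) - (1 - \<bar>s - u\<bar> / r) = (\<bar>s - u\<bar> - \<bar>s' - u\<bar>) / r"
    by (simp add: diff_divide_distrib)
  also have "\<bar>\<dots>\<bar> \<le> \<bar>s' - s\<bar> / r"
    using assms by (simp add: divide_right_mono)
  finally show ?thesis
    unfolding tent_def by linarith
qed

lemma tent_bounds: "r > 0 \<Longrightarrow> 0 \<le> tent r u s \<and> tent r u s \<le> 1"
  unfolding tent_def by auto

lemma tent_eq_0: "r > 0 \<Longrightarrow> r \<le> \<bar>s - u\<bar> \<Longrightarrow> tent r u s = 0"
  unfolding tent_def by (auto simp: field_simps)

lemma tent_self [simp]: "tent r u u = 1"
  unfolding tent_def by simp

lemma abs_tent_sum_le:
  assumes "r > 0"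
  shows "\<bar>\<Sum>u\<in>F. c u * tent r u s\<bar> \<le> (\<Sum>u\<in>F. \<bar>c u\<bar>)"
proof -
  have "\<bar>\<Sum>u\<in>F. c u * tent r u s\<bar> \<le> (\<Sum>u\<in>F. \<bar>c u * tent r u s\<bar>)"
    by (rule sum_abs)
  also have "\<dots> \<le> (\<Sum>u\<in>F. \<bar>c u\<bar>)"
    using tent_bounds[OF assms] by (intro sum_mono) (auto simp: abs_mult intro: mult_left_le)
  finally show ?thesis .
qed

lemma time_change_id: "time_change (\<lambda>s. s)"
  unfolding time_change_def by (auto simp: strict_mono_on_def)

lemma time_change_less: "time_change l \<Longrightarrow> 0 \<le> a \<Longrightarrow> a < b \<Longrightarrow> l a < l b"
  unfolding time_change_def strict_mono_on_def by auto

lemma time_change_le: "time_change l \<Longrightarrow> 0 \<le> a \<Longrightarrow> a \<le> b \<Longrightarrow> l a \<le> l b"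
  using time_change_less[of l a b] by (cases "a = b") auto

(* The perturbation is Lipschitz with constant (\<Sum>|c u|) / r < 1, so the map stays strictly
   increasing; r \<le> |u| keeps 0 fixed. *)
lemma time_change_tent_perturbation:
  assumes "r > 0" and "\<forall>u\<in>F. r \<le> \<bar>u\<bar>" and small: "(\<Sum>u\<in>F. \<bar>c u\<bar>) < r"
  shows "time_change (\<lambda>s. s - (\<Sum>u\<in>F. c u * tent r u s))" (is "time_change ?l")
proof -
  define C where "C = (\<Sum>u\<in>F. \<bar>c u\<bar>)"
  have dev: "\<bar>?l s - s\<bar> \<le> C" for s
    using abs_tent_sum_le[OF \<open>r > 0\<close>] unfolding C_def by simp
  have less: "?l s < ?l s'" if "s < s'" for s s'
  proof -
    have "\<bar>(\<Sum>u\<in>F. c u * tent r u s') - (\<Sum>u\<in>F. c u * tent r u s)\<bar>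
        = \<bar>\<Sum>u\<in>F. c u * (tent r u s' - tent r u s)\<bar>"
      by (simp add: sum_subtractf right_diff_distrib)
    also have "\<dots> \<le> (\<Sum>u\<in>F. \<bar>c u\<bar> * (\<bar>s' - s\<bar> / r))"
      using tent_lipschitz[OF \<open>r > 0\<close>]
      by (intro order_trans[OF sum_abs] sum_mono)
        (simp add: abs_mult mult_left_mono flip: times_divide_eq_right)
    also have "\<dots> = C / r * \<bar>s' - s\<bar>"
      unfolding C_def by (simp add: sum_distrib_right sum_divide_distrib)
    also have "\<dots> < \<bar>s' - s\<bar>"
      using mult_strict_right_mono[of "C / r" 1 "\<bar>s' - s\<bar>"] small \<open>r > 0\<close> that
      unfolding C_def by simp
    finally show ?thesis
      using that by linarith
  qed
  have l0: "?l 0 = 0"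
    using tent_eq_0[OF \<open>r > 0\<close>] assms(2) by (auto intro!: sum.neutral)
  have cont: "continuous_on A ?l" for A
    unfolding tent_def using \<open>r > 0\<close> by (intro continuous_intros) auto
  have "?l ` {0..} = {0..}"
  proof (intro set_eqI iffI)
    fix y assume "y \<in> ?l ` {0..}"
    then show "y \<in> {0..}"
      using less[of 0] l0 by (auto simp: le_less)
  next
    fix y :: real assume "y \<in> {0..}"
    moreover have "y \<le> ?l (y + C)"
      using dev[of "y + C"] by linarith
    moreover have "0 \<le> C"
      unfolding C_def by (simp add: sum_nonneg)
    ultimately obtain s where "0 \<le> s" "?l s = y"
      using IVT'[of ?l 0 y "y + C"] cont l0 by auto
    then show "y \<in> ?l ` {0..}" by auto
  qed
  then show ?thesis
    unfolding time_change_def using cont l0 less by (auto simp: strict_mono_on_def)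
qed

definition separated :: "real \<Rightarrow> real set \<Rightarrow> bool" where
  "separated r G \<longleftrightarrow> (\<forall>g\<in>G. \<forall>g'\<in>G. g \<noteq> g' \<longrightarrow> r \<le> \<bar>g - g'\<bar>)"

lemma separatedD: "separated r G \<Longrightarrow> g \<in> G \<Longrightarrow> g' \<in> G \<Longrightarrow> g \<noteq> g' \<Longrightarrow> r \<le> \<bar>g - g'\<bar>"
  unfolding separated_def by blast

lemma finite_imp_separated:
  assumes "finite G"
  obtains r where "r > 0" "separated r G"
proof -
  define D where "D = insert 1 ((\<lambda>(g, g'). \<bar>g - g'\<bar>) ` {p \<in> G \<times> G. fst p \<noteq> snd p})"
  have "finite D"
    unfolding D_def using assms by auto
  moreover have "\<forall>d\<in>D. d > 0"
    unfolding D_def by auto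
  ultimately have "Min D > 0"
    using Min_in[of D] unfolding D_def by blast
  moreover have "separated (Min D) G"
    unfolding separated_def
  proof (intro ballI impI)
    fix g g' assume "g \<in> G" "g' \<in> G" "g \<noteq> g'"
    then have "\<bar>g - g'\<bar> \<in> D"
      unfolding D_def by (intro insertI2 image_eqI[of _ _ "(g, g')"]) auto
    then show "Min D \<le> \<bar>g - g'\<bar>"
      using Min_le[OF \<open>finite D\<close>] by blast
  qed
  ultimately show ?thesis
    using that by blast
qed

lemma tent_sum_on_separated:
  assumes "r > 0" "separated (2 * r) G" "F \<subseteq> G" "finite F" "g \<in> G"
  shows "(\<Sum>u\<in>F. c u * tent r u g) = (if g \<in> F then c g else 0)"
proof -
  have "c u * tent r u g = (if u = g then c g else 0)" if "u \<in> F" for u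
  proof (cases "u = g")
    case False
    then have "2 * r \<le> \<bar>g - u\<bar>"
      using separatedD[OF assms(2,5) subsetD[OF assms(3) that]] by simp
    then have "tent r u g = 0"
      using \<open>r > 0\<close> by (intro tent_eq_0) auto
    then show ?thesis
      using False by simp
  qed simp
  then have "(\<Sum>u\<in>F. c u * tent r u g) = (\<Sum>u\<in>F. if u = g then c g else 0)"
    by (rule sum.cong[OF refl])
  also have "\<dots> = (if g \<in> F then c g else 0)"
    using sum.delta[OF \<open>finite F\<close>, of g "\<lambda>_. c g"] by simp
  finally show ?thesis .
qed

(* The witness is the identity minus tents of radius r centred at the points of F. *)
lemma time_change_moving_points:
  fixes F G :: "real set" and v :: "real \<Rightarrow> real"
  assumes "finite F" "F \<subseteq> G" "0 \<in> G - F" "r > 0" "separated (2 * r) G"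
    and "\<forall>u\<in>F. \<bar>u - v u\<bar> \<le> \<delta>" "real (card F) * \<delta> < r"
  obtains l where "time_change l" "\<forall>s. \<bar>l s - s\<bar> \<le> real (card F) * \<delta>"
    "\<forall>u\<in>F. l u = v u" "\<forall>g\<in>G - F. l g = g"
proof -
  define l where "l s = s - (\<Sum>u\<in>F. (u - v u) * tent r u s)" for s
  have sum_le: "(\<Sum>u\<in>F. \<bar>u - v u\<bar>) \<le> real (card F) * \<delta>"
    using assms(6) sum_bounded_above[of F "\<lambda>u. \<bar>u - v u\<bar>" \<delta>] by simp
  have "\<forall>u\<in>F. r \<le> \<bar>u\<bar>"
    using separatedD[OF assms(5)] assms(2,3,4) by fastforce
  then have "time_change l"
    unfolding l_def using sum_le assms(4,7) by (intro time_change_tent_perturbation) auto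
  moreover have "\<forall>s. \<bar>l s - s\<bar> \<le> real (card F) * \<delta>"
    unfolding l_def using order_trans[OF abs_tent_sum_le[OF \<open>r > 0\<close>] sum_le] by simp
  moreover have l_G: "l g = (if g \<in> F then v g else g)" if "g \<in> G" for g
    unfolding l_def using tent_sum_on_separated[OF assms(4,5,2,1) that] by simp
  then have "\<forall>u\<in>F. l u = v u" "\<forall>g\<in>G - F. l g = g"
    using assms(2) by auto
  ultimately show ?thesis
    using that by blast
qed

definition adjacent :: "'a::linorder set \<Rightarrow> 'a \<Rightarrow> 'a \<Rightarrow> bool" where
  "adjacent G a b \<longleftrightarrow> a \<in> G \<and> b \<in> G \<and> a < b \<and> (\<forall>c\<in>G. c \<le> a \<or> b \<le> c)"

lemma adjacent_below_exists:
  assumes "finite G" "a \<in> G" "b \<in> G" "a < b"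
  obtains a' where "adjacent G a' b" "a \<le> a'"
proof -
  define S where "S = {c \<in> G. c < b}"
  have "finite S" "a \<in> S"
    unfolding S_def using assms by auto
  then have "Max S \<in> S" "a \<le> Max S" "\<forall>c\<in>S. c \<le> Max S"
    using Max_in Max_ge by blast+
  then show ?thesis
    using that assms(3) unfolding adjacent_def S_def by force
qed

lemma adjacent_around_exists:
  assumes "finite G" "a \<in> G" "a \<le> s" "b \<in> G" "s < b"
  obtains a' b' where "adjacent G a' b'" "a' \<le> s" "s < b'"
proof -
  define S where "S = {c \<in> G. s < c}"
  have "finite S" "b \<in> S"
    unfolding S_def using assms by auto
  then have b': "Min S \<in> S" "\<forall>c\<in>S. Min S \<le> c"
    using Min_in Min_le by blast+
  then obtain a' where a': "adjacent G a' (Min S)" "a \<le> a'"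
    using adjacent_below_exists[OF assms(1,2), of "Min S"] assms(3) unfolding S_def by force
  have "a' \<le> s"
    using a' b' unfolding adjacent_def S_def by force
  then show ?thesis
    using that a'(1) b' unfolding S_def by blast
qed

lemma grid_point_above:
  fixes h a :: real
  assumes "h > 0" "0 \<le> a" "a < real K * h"
  obtains j where "j \<le> K" "a < real j * h" "real j * h \<le> a + h"
proof -
  define j where "j = Suc (nat \<lfloor>a / h\<rfloor>)"
  have "real j = \<lfloor>a / h\<rfloor> + 1"
    unfolding j_def using assms by simp
  then have "a / h < real j" "real j \<le> a / h + 1"
    by linarith+
  then have "a < real j * h" "real j * h \<le> a + h"
    using assms(1) by (simp_all add: field_simps)
  moreover from this have "real j * h < real (Suc K) * h"
    using assms(3) by (simp add: algebra_simps)
  then have "j \<le> K"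
    using assms(1) by (simp only: mult_less_cancel_right of_nat_less_iff) simp
  ultimately show ?thesis using that by blast
qed

lemma adjacent_le_grid_step:
  fixes G :: "real set"
  assumes "h > 0" "G \<subseteq> {0..real K * h}" "(\<lambda>j. real j * h) ` {..K} \<subseteq> G" "adjacent G a b"
  shows "b \<le> a + h"
proof -
  have "a \<in> G" "b \<in> G" "a < b" and between: "\<forall>c\<in>G. c \<le> a \<or> b \<le> c"
    using assms(4) unfolding adjacent_def by auto
  moreover from this have "a \<in> {0..real K * h}" "b \<in> {0..real K * h}"
    using assms(2) by auto
  ultimately have "0 \<le> a" "a < real K * h"
    by auto
  then obtain j where "j \<le> K" "a < real j * h" "real j * h \<le> a + h"
    by (rule grid_point_above[OF assms(1)])
  moreover from this have "real j * h \<in> G"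
    using assms(3) by auto
  with between have "real j * h \<le> a \<or> b \<le> real j * h"
    by blast
  ultimately show ?thesis
    by auto
qed

lemma eventually_diagonal_choice:
  fixes P :: "nat \<Rightarrow> nat \<Rightarrow> 'a \<Rightarrow> bool"
  assumes ev: "\<And>m. \<forall>\<^sub>F n in sequentially. \<exists>l. P m n l"
    and anti: "\<And>m m' n l. m \<le> m' \<Longrightarrow> P m' n l \<Longrightarrow> P m n l"
  obtains L where "\<And>m. \<forall>\<^sub>F n in sequentially. P m n (L n)"
proof -
  define M where "M n = Max {m. m \<le> n \<and> (\<exists>l. P m n l)}" for n
  define L where "L n = (SOME l. P (M n) n l)" for n
  have "\<forall>\<^sub>F n in sequentially. P m n (L n)" for m
    using ev[of m] eventually_ge_at_top[of m]
  proof eventually_elim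
    case (elim n)
    let ?S = "{m. m \<le> n \<and> (\<exists>l. P m n l)}"
    have "finite ?S" "m \<in> ?S"
      using elim by auto
    have "M n \<in> ?S"
      unfolding M_def by (rule Max_in) (use \<open>finite ?S\<close> \<open>m \<in> ?S\<close> in auto)
    have "m \<le> M n"
      unfolding M_def by (rule Max_ge) fact+
    have "P (M n) n (L n)"
      unfolding L_def by (rule someI_ex) (use \<open>M n \<in> ?S\<close> in auto)
    then show ?case
      by (rule anti[OF \<open>m \<le> M n\<close>])
  qed
  then show ?thesis
    using that by blast
qed

lemma exists_inverse_Suc_le:
  fixes e T :: real
  assumes "e > 0"
  obtains m :: nat where "1 / real (Suc m) \<le> e" "T \<le> real m"
proof -
  obtain m :: nat where m: "max T (1 / e) \<le> real m"
    using real_arch_simple by blast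
  then have "1 \<le> real (Suc m) * e"
    using assms by (simp add: field_simps)
  then have "1 / real (Suc m) \<le> e"
    by (simp add: field_simps)
  then show ?thesis
    using that m by auto
qed

(* L need only be a time change eventually: it is patched by the identity elsewhere. *)
lemma J1_tendsto_diagonalI:
  assumes "\<And>m. \<forall>\<^sub>F n in sequentially. time_change (L n) \<and> (\<forall>s\<ge>0. \<bar>L n s - s\<bar> \<le> 1 / Suc m) \<and>
      (\<forall>s\<in>{0..real m}. \<bar>f n (L n s) - g s\<bar> \<le> 1 / Suc m)"
  shows "J1_tendsto f g"
proof -
  define L' where "L' n = (if time_change (L n) then L n else (\<lambda>s. s))" for n
  have L': "\<forall>\<^sub>F n in sequentially. (\<forall>s\<ge>0. \<bar>L' n s - s\<bar> \<le> 1 / Suc m) \<and>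
      (\<forall>s\<in>{0..real m}. \<bar>f n (L' n s) - g s\<bar> \<le> 1 / Suc m)" for m
    using assms[of m] by (rule eventually_mono) (simp add: L'_def)
  show ?thesis
    unfolding J1_tendsto_def
  proof (intro exI[of _ L'] conjI allI impI)
    show "time_change (L' n)" for n
      unfolding L'_def using time_change_id by simp
  next
    fix e :: real assume "e > 0"
    then obtain m where m: "1 / real (Suc m) \<le> e"
      by (rule exists_inverse_Suc_le)
    show "\<forall>\<^sub>F n in sequentially. \<forall>s\<ge>0. \<bar>L' n s - s\<bar> \<le> e"
      using L'[of m] by (rule eventually_mono) (use m in auto)
  next
    fix T e :: real assume "T \<ge> 0" "e > 0"
    obtain m where m: "1 / real (Suc m) \<le> e" "T \<le> real m"
      using \<open>e > 0\<close> by (rule exists_inverse_Suc_le)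
    show "\<forall>\<^sub>F n in sequentially. \<forall>s\<in>{0..T}. \<bar>f n (L' n s) - g s\<bar> \<le> e"
      using L'[of m] by (rule eventually_mono) (use m in force)
  qed
qed

lemma J1_tendstoI:
  assumes "\<And>\<epsilon> T. \<epsilon> > 0 \<Longrightarrow> T \<ge> 0 \<Longrightarrow> \<forall>\<^sub>F n in sequentially. \<exists>l. time_change l \<and>
      (\<forall>s\<ge>0. \<bar>l s - s\<bar> \<le> \<epsilon>) \<and> (\<forall>s\<in>{0..T}. \<bar>f n (l s) - g s\<bar> \<le> \<epsilon>)"
  shows "J1_tendsto f g"
proof -
  define P where "P m n l \<longleftrightarrow> time_change l \<and> (\<forall>s\<ge>0. \<bar>l s - s\<bar> \<le> 1 / Suc m) \<and>
      (\<forall>s\<in>{0..real m}. \<bar>f n (l s) - g s\<bar> \<le> 1 / Suc m)" for m n l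
  obtain L where "\<And>m. \<forall>\<^sub>F n in sequentially. P m n (L n)"
  proof (rule eventually_diagonal_choice[of P])
    show "\<forall>\<^sub>F n in sequentially. \<exists>l. P m n l" for m
      using assms[of "1 / Suc m" "real m"] unfolding P_def by simp
    show "P m n l" if "m \<le> m'" "P m' n l" for m m' n l
    proof -
      have "1 / real (Suc m') \<le> 1 / real (Suc m)" "{0..real m} \<subseteq> {0..real m'}"
        using that(1) by (auto simp: frac_le)
      then show ?thesis
        using that(2) unfolding P_def by (meson order_trans subsetD)
    qed
  qed blast
  then show ?thesis
    unfolding P_def by (rule J1_tendsto_diagonalI)
qed

lemma qv_approx_mono: "s \<le> s' \<Longrightarrow> qv_approx t k x n s \<le> qv_approx t k x n s'"
  unfolding qv_approx_def by (rule sum_mono2) auto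

lemma qv_approx_add_increment:
  assumes "i < k n" "r < t n i"
  shows "qv_approx t k x n r + (x (t n (Suc i)) - x (t n i))^2 \<le> qv_approx t k x n (t n i)"
proof -
  define S where "S = {j. j < k n \<and> t n j \<le> t n i}"
  have "finite S" "i \<in> S"
    unfolding S_def using assms by auto
  have "qv_approx t k x n r \<le> (\<Sum>j\<in>S - {i}. (x (t n (Suc j)) - x (t n j))^2)"
    unfolding qv_approx_def S_def using assms(2) by (intro sum_mono2) auto
  moreover have "qv_approx t k x n (t n i)
      = (x (t n (Suc i)) - x (t n i))^2 + (\<Sum>j\<in>S - {i}. (x (t n (Suc j)) - x (t n j))^2)"
    unfolding qv_approx_def S_def[symmetric] by (rule sum.remove[OF \<open>finite S\<close> \<open>i \<in> S\<close>])
  ultimately show ?thesis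
    by linarith
qed

locale partitions =
  fixes t :: "nat \<Rightarrow> nat \<Rightarrow> real" and k :: "nat \<Rightarrow> nat"
  assumes partition_seq: "partition_seq t k"
begin

lemma t_first: "t n 0 = 0"
  using partition_seq unfolding partition_seq_def by auto

definition prev_idx :: "nat \<Rightarrow> real \<Rightarrow> nat" where
  "prev_idx n u = Max {i. i \<le> k n \<and> t n i < u}"

lemma prev_idx:
  assumes "0 < u"
  shows "prev_idx n u \<le> k n" "t n (prev_idx n u) < u"
proof -
  have "finite {i. i \<le> k n \<and> t n i < u}" "0 \<in> {i. i \<le> k n \<and> t n i < u}"
    using assms t_first by auto
  then have "prev_idx n u \<in> {i. i \<le> k n \<and> t n i < u}"
    unfolding prev_idx_def using Max_in by blast
  then show "prev_idx n u \<le> k n" "t n (prev_idx n u) < u"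
    by auto
qed

lemma le_t_Suc_prev_idx:
  assumes "0 < u" "prev_idx n u < k n"
  shows "u \<le> t n (Suc (prev_idx n u))"
proof (rule ccontr)
  assume "\<not> ?thesis"
  with assms(2) have "Suc (prev_idx n u) \<in> {i. i \<le> k n \<and> t n i < u}"
    by auto
  then have "Suc (prev_idx n u) \<le> prev_idx n u"
    using Max_ge[of "{i. i \<le> k n \<and> t n i < u}"] by (simp add: prev_idx_def)
  then show False by simp
qed

lemma eventually_prev_idx_near:
  assumes "0 < u" "e > 0"
  shows "\<forall>\<^sub>F n in sequentially. prev_idx n u < k n \<and>
    u - e \<le> t n (prev_idx n u) \<and> t n (Suc (prev_idx n u)) \<le> u + e"
proof -
  have "\<forall>\<^sub>F n in sequentially. u < t n (k n)"
    using partition_seq unfolding partition_seq_def by (simp add: filterlim_at_top_dense)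
  moreover have "\<forall>\<^sub>F n in sequentially. \<forall>i<k n. t n i \<le> u \<longrightarrow> t n (Suc i) - t n i \<le> e"
    using partition_seq assms unfolding partition_seq_def by auto
  ultimately show ?thesis
  proof eventually_elim
    case (elim n)
    have "prev_idx n u < k n"
      using elim(1) prev_idx[OF assms(1), of n] by (auto simp: le_less)
    then show ?case
      using elim(2) prev_idx[OF assms(1), of n] le_t_Suc_prev_idx[OF assms(1)] by force
  qed
qed

lemma prev_idx_tendsto:
  assumes "0 < u"
  shows "(\<lambda>n. t n (prev_idx n u)) \<longlonglongrightarrow> u" "(\<lambda>n. t n (Suc (prev_idx n u))) \<longlonglongrightarrow> u"
proof -
  have near: "\<forall>\<^sub>F n in sequentially.
      \<bar>t n (prev_idx n u) - u\<bar> < e \<and> \<bar>t n (Suc (prev_idx n u)) - u\<bar> < e" if "e > 0" for e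
    using eventually_prev_idx_near[OF assms half_gt_zero[OF that]]
  proof (rule eventually_mono)
    fix n
    assume "prev_idx n u < k n \<and>
      u - e / 2 \<le> t n (prev_idx n u) \<and> t n (Suc (prev_idx n u)) \<le> u + e / 2"
    moreover have "t n (prev_idx n u) < u"
      by (rule prev_idx(2)[OF assms])
    ultimately show "\<bar>t n (prev_idx n u) - u\<bar> < e \<and> \<bar>t n (Suc (prev_idx n u)) - u\<bar> < e"
      using le_t_Suc_prev_idx[OF assms, of n] that by auto
  qed
  show "(\<lambda>n. t n (prev_idx n u)) \<longlonglongrightarrow> u" "(\<lambda>n. t n (Suc (prev_idx n u))) \<longlonglongrightarrow> u"
    by (rule tendstoI; use near in \<open>force simp: dist_real_def elim: eventually_mono\<close>)+
qed

lemma increment_at_prev_idx_tendsto: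
  assumes "cadlag x" "0 < u"
  shows "(\<lambda>n. (x (t n (Suc (prev_idx n u))) - x (t n (prev_idx n u)))^2) \<longlonglongrightarrow> (jump x u)^2"
proof -
  obtain L where L: "(x \<longlongrightarrow> L) (at_left u)"
    using assms unfolding cadlag_def by auto
  have "jump x u = x u - L"
    using assms(2) tendsto_Lim[OF _ L] unfolding jump_def by simp
  have "continuous (at u within {u..}) x"
    using assms unfolding cadlag_def continuous_within at_within_Ici_at_right by auto
  then have right: "(\<lambda>n. x (t n (Suc (prev_idx n u)))) \<longlonglongrightarrow> x u"
    using eventually_prev_idx_near[OF assms(2) zero_less_one] le_t_Suc_prev_idx[OF assms(2)]
    by (intro continuous_within_tendsto_compose[OF _ _ prev_idx_tendsto(2)[OF assms(2)]])
      (auto elim: eventually_mono)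
  have "filterlim (\<lambda>n. t n (prev_idx n u)) (at_left u) sequentially"
    using prev_idx_tendsto(1)[OF assms(2)] prev_idx(2)[OF assms(2)]
    by (intro tendsto_imp_filterlim_at_left) auto
  then have left: "(\<lambda>n. x (t n (prev_idx n u))) \<longlonglongrightarrow> L"
    using filterlim_compose[OF L] by blast
  show ?thesis
    unfolding \<open>jump x u = x u - L\<close> by (intro tendsto_intros right left)
qed

end

locale qv_setting = partitions t k
  for t :: "nat \<Rightarrow> nat \<Rightarrow> real" and k :: "nat \<Rightarrow> nat" +
  fixes x q qc :: "real \<Rightarrow> real"
  assumes x_cadlag: "cadlag x"
    and qv_tendsto: "\<forall>s\<ge>0. (\<lambda>n. qv_approx t k x n s) \<longlonglongrightarrow> q s"
    and qc_cont: "continuous_on {0..} qc" and qc_mono: "mono_on {0..} qc"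
    and jumps_has_sum: "\<forall>s\<ge>0. ((\<lambda>u. (jump x u)^2) has_sum (q s - qc s)) {0..s}"
begin

abbreviation "Q \<equiv> qv_approx t k x"
abbreviation "J u \<equiv> (jump x u)^2"
abbreviation "incr n i \<equiv> (x (t n (Suc i)) - x (t n i))^2"

lemma jumps_has_sum_between:
  assumes "0 \<le> a" "a \<le> b"
  shows "(J has_sum (q b - qc b - (q a - qc a))) {a<..b}"
proof -
  have "{a<..b} = {0..b} - {0..a}"
    using assms by auto
  then show ?thesis
    using has_sum_Diff[OF jumps_has_sum[rule_format, of b] jumps_has_sum[rule_format, of a]] assms
    by auto
qed

lemma q_le_diff_jump:
  assumes "0 \<le> a" "a < b"
  shows "q a \<le> q b - J b"
proof -
  have "J b \<le> q b - qc b - (q a - qc a)"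
    using has_sum_mono2[OF has_sum_finiteI[of "{b}"] jumps_has_sum_between[of a b]] assms by auto
  moreover have "qc a \<le> qc b"
    using qc_mono assms unfolding mono_on_def by auto
  ultimately show ?thesis by simp
qed

lemma q_mono:
  assumes "0 \<le> a" "a \<le> b"
  shows "q a \<le> q b"
proof (cases "a = b")
  case False
  then have "q a \<le> q b - J b"
    using assms by (intro q_le_diff_jump) auto
  then show ?thesis
    using zero_le_power2[of "jump x b"] by linarith
qed simp

(* Since q B - qc B is the total squared jump mass on [0, B], the third clause says that the jumps
   outside F contribute at most e. *)
definition fine_grid :: "real \<Rightarrow> real \<Rightarrow> real set \<Rightarrow> real set \<Rightarrow> bool" where
  "fine_grid e B F G \<longleftrightarrow> finite G \<and> F \<subseteq> G \<and> q B - qc B - sum J F \<le> e \<and>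
     G \<subseteq> {0..B} \<and> 0 \<in> G - F \<and> B \<in> G \<and> (\<forall>a b. adjacent G a b \<longrightarrow> qc b - qc a \<le> e)"

lemma fine_grid_jumps_pos:
  assumes "fine_grid e B F G" "u \<in> F"
  shows "0 < u"
proof -
  have "u \<in> {0..B}" "u \<noteq> 0"
    using assms unfolding fine_grid_def by auto
  then show ?thesis by simp
qed

lemma jumps_off_grid_le:
  assumes "fine_grid e B F G" "(J has_sum S) A" "A \<subseteq> {0..B} - F"
  shows "S \<le> e"
proof -
  have "finite F" "F \<subseteq> {0..B}" "0 \<le> B"
    using assms(1) unfolding fine_grid_def by (auto intro: finite_subset)
  then have "(J has_sum (q B - qc B - sum J F)) ({0..B} - F)"
    using has_sum_Diff[OF jumps_has_sum[rule_format] has_sum_finiteI] by blast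
  then have "S \<le> q B - qc B - sum J F"
    using has_sum_mono2[OF assms(2)] assms(3) by auto
  then show ?thesis
    using assms(1) unfolding fine_grid_def by simp
qed

lemma jump_off_grid_le:
  assumes "fine_grid e B F G" "u \<in> {0..B} - F"
  shows "J u \<le> e"
  using jumps_off_grid_le[OF assms(1) has_sum_finiteI[of "{u}"]] assms(2) by auto

lemma q_adjacent_diff_le:
  assumes grid: "fine_grid e B F G" and "adjacent G a b"
  shows "q b - J b - q a \<le> 2 * e"
proof -
  have G: "F \<subseteq> G" "G \<subseteq> {0..B}"
    using grid unfolding fine_grid_def by auto
  have "a \<in> G" "b \<in> G" "a < b" and between: "\<forall>c\<in>G. c \<le> a \<or> b \<le> c"
    using assms(2) unfolding adjacent_def by auto
  then have "0 \<le> a" "b \<le> B"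
    using G by auto
  have "{a<..<b} \<subseteq> {0..B} - F"
  proof
    fix c assume c: "c \<in> {a<..<b}"
    have "c \<notin> G"
    proof
      assume "c \<in> G"
      with between have "c \<le> a \<or> b \<le> c" by blast
      with c show False by auto
    qed
    then show "c \<in> {0..B} - F"
      using c G \<open>0 \<le> a\<close> \<open>b \<le> B\<close> by auto
  qed
  moreover have "{a<..<b} = {a<..b} - {b}"
    using \<open>a < b\<close> by auto
  then have "(J has_sum (q b - qc b - (q a - qc a) - J b)) {a<..<b}"
    using has_sum_Diff[OF jumps_has_sum_between[of a b] has_sum_finiteI[of "{b}"]] \<open>0 \<le> a\<close> \<open>a < b\<close>
    by auto
  ultimately have "q b - qc b - (q a - qc a) - J b \<le> e"
    using jumps_off_grid_le[OF grid] by blast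
  moreover have "qc b - qc a \<le> e"
    using grid assms(2) unfolding fine_grid_def by blast
  ultimately show ?thesis by simp
qed

lemma big_jumps_exist:
  assumes "e > 0" "0 \<le> B"
  obtains F where "finite F" "F \<subseteq> {0<..B}" "q B - qc B - sum J F \<le> e"
proof -
  obtain F0 where F0: "finite F0" "F0 \<subseteq> {0..B}" "dist (sum J F0) (q B - qc B) \<le> e"
    using has_sum_finite_approximation[OF jumps_has_sum[rule_format, OF assms(2)] assms(1)] by blast
  have "sum J (F0 - {0}) = sum J F0"
    using F0(1) by (simp add: sum_diff1 jump_def)
  moreover have "q B - qc B - sum J F0 \<le> e"
    using F0(3) by (simp add: dist_real_def abs_le_iff)
  moreover have "F0 - {0} \<subseteq> {0<..B}"
    using F0(2) by auto
  ultimately show ?thesis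
    using that[of "F0 - {0}"] F0(1) by simp
qed

lemma fine_grid_exists:
  assumes "e > 0" "B > 0"
  obtains F G where "fine_grid e B F G"
proof -
  obtain F where F: "finite F" "F \<subseteq> {0<..B}" "q B - qc B - sum J F \<le> e"
    using big_jumps_exist[OF assms(1) less_imp_le[OF assms(2)]] by blast
  have "uniformly_continuous_on {0..B} qc"
    using continuous_on_subset[OF qc_cont] by (intro compact_uniformly_continuous) auto
  then obtain \<eta> where "\<eta> > 0"
    and \<eta>: "\<And>a b. a \<in> {0..B} \<Longrightarrow> b \<in> {0..B} \<Longrightarrow> dist b a < \<eta> \<Longrightarrow> dist (qc b) (qc a) < e"
    unfolding uniformly_continuous_on_def using assms(1) by metis
  define K where "K = Suc (nat \<lceil>B / \<eta>\<rceil>)"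
  define h where "h = B / real K"
  have "B / \<eta> < real K" "real K > 0"
    unfolding K_def by linarith+
  then have h: "h > 0" "h < \<eta>" "real K * h = B"
    unfolding h_def using assms(2) \<open>\<eta> > 0\<close> by (auto simp: field_simps)
  define G where "G = F \<union> (\<lambda>j. real j * h) ` {..K}"
  have "real j * h \<in> {0..B}" if "j \<le> K" for j
    using that h mult_right_mono[of "real j" "real K" h] by auto
  then have "G \<subseteq> {0..B}"
    unfolding G_def using F(2) by auto
  moreover have "finite G" "F \<subseteq> G" "(\<lambda>j. real j * h) ` {..K} \<subseteq> G"
    unfolding G_def using F(1) by auto
  moreover from this have "0 \<in> G - F" "B \<in> G"
    using F(2) h(3) image_eqI[of 0 "\<lambda>j. real j * h" 0 "{..K}"]
      image_eqI[of B "\<lambda>j. real j * h" K "{..K}"]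
    by auto
  moreover have "qc b - qc a \<le> e" if "adjacent G a b" for a b
  proof -
    have "a \<in> {0..B}" "b \<in> {0..B}" "a < b"
      using that \<open>G \<subseteq> {0..B}\<close> unfolding adjacent_def by auto
    moreover have "G \<subseteq> {0..real K * h}"
      using \<open>G \<subseteq> {0..B}\<close> h(3) by simp
    then have "b \<le> a + h"
      using adjacent_le_grid_step[OF h(1) _ _ that] \<open>(\<lambda>j. real j * h) ` {..K} \<subseteq> G\<close> by blast
    ultimately show ?thesis
      using \<eta>[of a b] h(2) by (auto simp: dist_real_def)
  qed
  ultimately show ?thesis
    using that F(3) unfolding fine_grid_def by blast
qed

context
  fixes e B r \<delta> :: real and F G :: "real set" and n :: nat
  assumes grid: "fine_grid e B F G" and sep: "separated (2 * r) G" and "r > 0" "\<delta> < r"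
    and close_on_grid: "\<forall>g\<in>G. \<bar>Q n g - q g\<bar> < e"
    and near_jumps: "\<forall>u\<in>F. prev_idx n u < k n \<and> u - \<delta> \<le> t n (prev_idx n u) \<and>
      J u - e < incr n (prev_idx n u)"
begin

lemma grid_facts: "finite G" "F \<subseteq> G" "G \<subseteq> {0..B}" "0 \<in> G - F" "B \<in> G"
  using grid unfolding fine_grid_def by auto

context
  fixes l :: "real \<Rightarrow> real"
  assumes l: "time_change l" and l_jumps: "\<forall>u\<in>F. l u = t n (prev_idx n u)"
    and l_grid: "\<forall>g\<in>G - F. l g = g"
begin

lemma Q_time_change_grid_ge:
  assumes "g \<in> G"
  shows "q g - 4 * e \<le> Q n (l g)"
proof (cases "g \<in> F")
  case False
  then show ?thesis
    using assms close_on_grid l_grid by force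
next
  case True
  let ?i = "prev_idx n g"
  have "0 < g"
    using fine_grid_jumps_pos[OF grid True] .
  then obtain a where a: "adjacent G a g"
    using adjacent_below_exists[of G 0 g] grid_facts assms by blast
  \<comment> \<open>separation puts a to the left of t n ?i, where Q n picks up the increment across g\<close>
  have "a \<le> g - 2 * r"
    using a separatedD[OF sep, of g a] assms unfolding adjacent_def by auto
  moreover have near: "?i < k n" "g - \<delta> \<le> t n ?i" "J g - e < incr n ?i"
    using near_jumps True by auto
  ultimately have "Q n a + incr n ?i \<le> Q n (t n ?i)"
    using \<open>\<delta> < r\<close> prev_idx(2)[OF \<open>0 < g\<close>, of n] by (intro qv_approx_add_increment) auto
  moreover have "q a - e < Q n a"
    using close_on_grid a unfolding adjacent_def by force
  moreover have "q g - J g - q a \<le> 2 * e"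
    by (rule q_adjacent_diff_le[OF grid a])
  ultimately show ?thesis
    using near l_jumps True by auto
qed

lemma Q_time_change_le_grid:
  assumes "g \<in> G" "0 \<le> s" "s < g"
  shows "Q n (l s) \<le> q g - J g + 2 * e"
proof -
  have "l s < l g"
    using time_change_less[OF l assms(2,3)] .
  have "Q n g < q g + e"
    using close_on_grid assms(1) by force
  show ?thesis
  proof (cases "g \<in> F")
    case False
    then have "Q n (l s) \<le> Q n g"
      using \<open>l s < l g\<close> l_grid assms(1) by (auto intro: qv_approx_mono)
    moreover have "J g \<le> e"
      using jump_off_grid_le[OF grid] assms(1) False grid_facts by auto
    ultimately show ?thesis
      using \<open>Q n g < q g + e\<close> by linarith
  next
    case True
    let ?i = "prev_idx n g"
    have "0 < g"
      using fine_grid_jumps_pos[OF grid True] .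
    have near: "?i < k n" "J g - e < incr n ?i"
      using near_jumps True by auto
    have "Q n (l s) + incr n ?i \<le> Q n (t n ?i)"
      using \<open>l s < l g\<close> l_jumps True near by (intro qv_approx_add_increment) auto
    moreover have "Q n (t n ?i) \<le> Q n g"
      by (rule qv_approx_mono[OF less_imp_le[OF prev_idx(2)[OF \<open>0 < g\<close>]]])
    ultimately show ?thesis
      using near \<open>Q n g < q g + e\<close> by linarith
  qed
qed

lemma Q_time_change_close:
  assumes "0 \<le> s" "s < B"
  shows "\<bar>Q n (l s) - q s\<bar> \<le> 6 * e"
proof -
  obtain a b where ab: "adjacent G a b" "a \<le> s" "s < b"
    using adjacent_around_exists[of G 0 s B] grid_facts assms by blast
  then have "a \<in> G" "b \<in> G" "0 \<le> a"
    using grid_facts unfolding adjacent_def by auto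
  have "q a - 4 * e \<le> Q n (l s)"
    using Q_time_change_grid_ge[OF \<open>a \<in> G\<close>] time_change_le[OF l \<open>0 \<le> a\<close> ab(2)] qv_approx_mono
    by (meson order_trans)
  moreover have "Q n (l s) \<le> q b - J b + 2 * e"
    by (rule Q_time_change_le_grid[OF \<open>b \<in> G\<close> assms(1) ab(3)])
  moreover have "q b - J b - q a \<le> 2 * e"
    by (rule q_adjacent_diff_le[OF grid ab(1)])
  moreover have "q a \<le> q s" "q s \<le> q b - J b"
    using q_mono[OF \<open>0 \<le> a\<close> ab(2)] q_le_diff_jump[OF assms(1) ab(3)] by auto
  ultimately show ?thesis
    by linarith
qed

end

lemma time_change_close_exists:
  assumes "real (card F) * \<delta> < r"
  obtains l where "time_change l" "\<forall>s. \<bar>l s - s\<bar> \<le> real (card F) * \<delta>"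
    "\<forall>s\<in>{0..<B}. \<bar>Q n (l s) - q s\<bar> \<le> 6 * e"
proof -
  have "finite F"
    using grid_facts finite_subset by blast
  have "\<forall>u\<in>F. \<bar>u - t n (prev_idx n u)\<bar> \<le> \<delta>"
  proof
    fix u assume "u \<in> F"
    then show "\<bar>u - t n (prev_idx n u)\<bar> \<le> \<delta>"
      using near_jumps prev_idx(2)[OF fine_grid_jumps_pos[OF grid \<open>u \<in> F\<close>], of n] by auto
  qed
  then obtain l where l: "time_change l" "\<forall>s. \<bar>l s - s\<bar> \<le> real (card F) * \<delta>"
    "\<forall>u\<in>F. l u = t n (prev_idx n u)" "\<forall>g\<in>G - F. l g = g"
    using time_change_moving_points[where v = "\<lambda>u. t n (prev_idx n u)",
        OF \<open>finite F\<close> grid_facts(2,4) \<open>r > 0\<close> sep _ assms]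
    by blast
  then show ?thesis
    using that Q_time_change_close[OF l(1,3,4)] by auto
qed

end

lemma eventually_close_on_grid:
  assumes "finite G" "G \<subseteq> {0..}" "e > 0"
  shows "\<forall>\<^sub>F n in sequentially. \<forall>g\<in>G. \<bar>Q n g - q g\<bar> < e"
proof (intro eventually_ball_finite[OF assms(1)] ballI)
  fix g assume "g \<in> G"
  then have "0 \<le> g"
    using assms(2) by auto
  then show "\<forall>\<^sub>F n in sequentially. \<bar>Q n g - q g\<bar> < e"
    using tendstoD[OF qv_tendsto[rule_format] assms(3)] by (simp add: dist_real_def)
qed

lemma eventually_near_jumps:
  assumes "finite F" "F \<subseteq> {0<..}" "e > 0" "\<delta> > 0"
  shows "\<forall>\<^sub>F n in sequentially. \<forall>u\<in>F. prev_idx n u < k n \<and>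
    u - \<delta> \<le> t n (prev_idx n u) \<and> J u - e < incr n (prev_idx n u)"
proof (intro eventually_ball_finite[OF assms(1)] ballI)
  fix u assume "u \<in> F"
  then have "0 < u"
    using assms(2) by auto
  have "J u - e < J u"
    using assms(3) by simp
  show "\<forall>\<^sub>F n in sequentially. prev_idx n u < k n \<and>
    u - \<delta> \<le> t n (prev_idx n u) \<and> J u - e < incr n (prev_idx n u)"
    using eventually_prev_idx_near[OF \<open>0 < u\<close> assms(4)]
      order_tendstoD(1)[OF increment_at_prev_idx_tendsto[OF x_cadlag \<open>0 < u\<close>] \<open>J u - e < J u\<close>]
    by eventually_elim auto
qed

lemma eventually_time_change_close:
  assumes "\<epsilon> > 0" "T \<ge> 0"
  shows "\<forall>\<^sub>F n in sequentially. \<exists>l. time_change l \<and> (\<forall>s\<ge>0. \<bar>l s - s\<bar> \<le> \<epsilon>) \<and>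
    (\<forall>s\<in>{0..T}. \<bar>Q n (l s) - q s\<bar> \<le> \<epsilon>)"
proof -
  define e where "e = \<epsilon> / 6"
  have "e > 0"
    unfolding e_def using assms by simp
  obtain F G where grid: "fine_grid e (T + 1) F G"
    using fine_grid_exists[OF \<open>e > 0\<close>] assms(2) by (metis add_nonneg_pos zero_less_one)
  then have "finite G" "G \<subseteq> {0..}" "finite F" "F \<subseteq> {0<..}"
    using fine_grid_jumps_pos[OF grid] unfolding fine_grid_def by (auto intro: finite_subset)
  obtain d where "d > 0" "separated d G"
    using finite_imp_separated[OF \<open>finite G\<close>] .
  define r where "r = d / 2"
  have "r > 0" "separated (2 * r) G"
    unfolding r_def using \<open>d > 0\<close> \<open>separated d G\<close> by auto
  define \<delta> where "\<delta> = min r \<epsilon> / (real (card F) + 2)"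
  have "\<delta> > 0" "(real (card F) + 2) * \<delta> = min r \<epsilon>"
    unfolding \<delta>_def using \<open>r > 0\<close> assms(1) by simp_all
  then have "real (card F) * \<delta> + 2 * \<delta> = min r \<epsilon>" "0 \<le> real (card F) * \<delta>"
    by (simp_all add: algebra_simps)
  then have \<delta>: "\<delta> < r" "real (card F) * \<delta> < r" "real (card F) * \<delta> \<le> \<epsilon>"
    using \<open>\<delta> > 0\<close> by linarith+
  show ?thesis
    using eventually_close_on_grid[OF \<open>finite G\<close> \<open>G \<subseteq> {0..}\<close> \<open>e > 0\<close>]
      eventually_near_jumps[OF \<open>finite F\<close> \<open>F \<subseteq> {0<..}\<close> \<open>e > 0\<close> \<open>\<delta> > 0\<close>]
  proof eventually_elim
    case (elim n)
    obtain l where l: "time_change l" "\<forall>s. \<bar>l s - s\<bar> \<le> real (card F) * \<delta>"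
      "\<forall>s\<in>{0..<T + 1}. \<bar>Q n (l s) - q s\<bar> \<le> 6 * e"
      by (rule time_change_close_exists[OF grid \<open>separated (2 * r) G\<close> \<open>r > 0\<close> \<delta>(1) elim \<delta>(2)])
    moreover have "\<forall>s\<ge>0. \<bar>l s - s\<bar> \<le> \<epsilon>"
      using l(2) \<delta>(3) by (meson order_trans)
    moreover have "\<forall>s\<in>{0..T}. \<bar>Q n (l s) - q s\<bar> \<le> \<epsilon>"
      using l(3) unfolding e_def by auto
    ultimately show ?case
      by blast
  qed
qed

end

theorem proposition2p5:
  fixes t :: "nat \<Rightarrow> nat \<Rightarrow> real" and k :: "nat \<Rightarrow> nat"
    and x q qc :: "real \<Rightarrow> real"
  assumes "partition_seq t k"
    and "cadlag x"
    and "\<forall>s\<ge>0. (\<lambda>n. qv_approx t k x n s) \<longlonglongrightarrow> q s"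
    and "continuous_on {0..} qc" and "mono_on {0..} qc"
    and "\<forall>s\<ge>0. ((\<lambda>u. (jump x u)^2) has_sum (q s - qc s)) {0..s}"
  shows "J1_tendsto (qv_approx t k x) q"
proof -
  interpret qv_setting t k x q qc
    using assms by unfold_locales
  show ?thesis
    by (rule J1_tendstoI) (rule eventually_time_change_close)
qed

end
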